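(* Let $\alpha>0$, let $G$ be a standard normal random variable and let $G_\alpha:=\operatorname{sgn}(G)|G|^{2/\alpha}$. Then $\|G_\alpha\|_{\psi_\alpha}=(8/3)^{1/\alpha}$.
   Context: For a random variable $X$ and $\alpha>0$, $\|X\|_{\psi_\alpha}:=\inf\{K>0:\ \mathbb{E}\exp(|X/K|^\alpha)\le 2\}$ (with $\inf\emptyset=\infty$). $\operatorname{sgn}$ denotes the signum function. *)

theory Defs
  imports "HOL-Probability.Probability"
begin

text \<open>Orlicz psi_alpha quasi-norm: infimum of all K > 0 with E exp(|X/K|^alpha) \<le> 2,
  taken in the extended reals so that the infimum of the empty set is \<infinity>.\<close>
definition psi_norm :: "'a measure \<Rightarrow> real \<Rightarrow> ('a \<Rightarrow> real) \<Rightarrow> ereal" where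
  "psi_norm M \<alpha> X =
     Inf {ereal K | K. K > 0 \<and>
        (\<integral>\<^sup>+ x. ennreal (exp (\<bar>X x / K\<bar> powr \<alpha>)) \<partial>M) \<le> 2}"

end

theory Submission
  imports Defs
begin

text \<open>Since \<open>|G\<^sub>\<alpha>/K|\<^sup>\<alpha> = G\<^sup>2/K\<^sup>\<alpha>\<close>, the Orlicz condition at level \<open>K\<close> reads
  \<open>E exp(G\<^sup>2/c) \<le> 2\<close> with \<open>c = K\<^sup>\<alpha>\<close>. Completing the square, \<open>E exp(G\<^sup>2/c)\<close> is
  \<open>sqrt(c/(c-2))\<close> for \<open>c > 2\<close> (it is \<open>s\<close> times the total mass of a centred normal
  density with variance \<open>s\<^sup>2 = c/(c-2)\<close>) and infinite for \<open>c \<le> 2\<close>. This is at most \<open>2\<close>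
  exactly when \<open>c \<ge> 8/3\<close>, i.e. \<open>K \<ge> (8/3)\<^bsup>1/\<alpha>\<^esup>\<close>.\<close>

lemma psi_norm_eqI:
  assumes "b > 0"
    and "\<And>K. K > 0 \<Longrightarrow> (\<integral>\<^sup>+ x. ennreal (exp (\<bar>X x / K\<bar> powr \<alpha>)) \<partial>M) \<le> 2 \<longleftrightarrow> b \<le> K"
  shows "psi_norm M \<alpha> X = ereal b"
proof -
  have "{ereal K | K. K > 0 \<and> (\<integral>\<^sup>+ x. ennreal (exp (\<bar>X x / K\<bar> powr \<alpha>)) \<partial>M) \<le> 2}
      = ereal ` {b..}"
    using assms by force
  moreover have "Inf (ereal ` {b..}) = ereal b"
    by (simp add: ereal_Inf'[symmetric])
  ultimately show ?thesis
    unfolding psi_norm_def by simp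
qed

lemma nn_integral_std_normal_exp_square:
  fixes c :: real
  assumes "c > 2"
  shows "(\<integral>\<^sup>+ x. ennreal (std_normal_density x) * ennreal (exp (x\<^sup>2 / c)) \<partial>lborel)
         = ennreal (sqrt (c / (c - 2)))"
proof -
  define s where "s = sqrt (c / (c - 2))"
  have s: "s > 0" and s2: "s\<^sup>2 = c / (c - 2)"
    using assms by (simp_all add: s_def)
  have density: "std_normal_density x * exp (x\<^sup>2 / c) = s * normal_density 0 s x" for x
  proof -
    have "- x\<^sup>2 / 2 + x\<^sup>2 / c = - x\<^sup>2 / (2 * s\<^sup>2)"
      using assms unfolding s2 by (simp add: field_simps)
    moreover have "1 / sqrt (2 * pi) = s * (1 / sqrt (2 * pi * s\<^sup>2))"
      using s by (simp add: real_sqrt_mult)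
    ultimately show ?thesis
      unfolding std_normal_density_def normal_density_def
      by (simp add: exp_add[symmetric])
  qed
  have total_mass: "(\<integral>\<^sup>+ x. ennreal (normal_density 0 s x) \<partial>lborel) = 1"
  proof -
    interpret prob_space "density lborel (normal_density 0 s)"
      by (rule prob_space_normal_density[OF s])
    show ?thesis
      using emeasure_space_1 by (simp add: emeasure_density)
  qed
  have "(\<integral>\<^sup>+ x. ennreal (std_normal_density x) * ennreal (exp (x\<^sup>2 / c)) \<partial>lborel)
      = (\<integral>\<^sup>+ x. ennreal s * ennreal (normal_density 0 s x) \<partial>lborel)"
    by (intro nn_integral_cong) (simp add: ennreal_mult'[symmetric] density s less_imp_le)
  also have "\<dots> = ennreal s"
    by (simp add: nn_integral_cmult total_mass)
  finally show ?thesis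
    by (simp add: s_def)
qed

lemma nn_integral_std_normal_exp_square_infinite:
  fixes c :: real
  assumes "c > 0" and "c \<le> 2"
  shows "(\<integral>\<^sup>+ x. ennreal (std_normal_density x) * ennreal (exp (x\<^sup>2 / c)) \<partial>lborel) = \<infinity>"
proof -
  have "ennreal (1 / sqrt (2 * pi)) \<le> ennreal (std_normal_density x) * ennreal (exp (x\<^sup>2 / c))"
    for x :: real
  proof -
    have "x\<^sup>2 / 2 \<le> x\<^sup>2 / c"
      using assms by (intro divide_left_mono) auto
    then have "exp (- x\<^sup>2 / 2 + x\<^sup>2 / c) \<ge> 1"
      by simp
    then have "1 / sqrt (2 * pi) \<le> std_normal_density x * exp (x\<^sup>2 / c)"
      unfolding std_normal_density_def by (simp add: exp_add[symmetric] divide_le_eq)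
    then show ?thesis
      by (simp add: ennreal_mult'[symmetric])
  qed
  then have "(\<integral>\<^sup>+ (x::real). ennreal (1 / sqrt (2 * pi)) \<partial>lborel)
      \<le> (\<integral>\<^sup>+ x. ennreal (std_normal_density x) * ennreal (exp (x\<^sup>2 / c)) \<partial>lborel)"
    by (rule nn_integral_mono)
  moreover have "(\<integral>\<^sup>+ (x::real). ennreal (1 / sqrt (2 * pi)) \<partial>lborel) = \<infinity>"
    by (simp add: ennreal_mult_top)
  ultimately show ?thesis
    by (simp add: top_unique)
qed

lemma nn_integral_std_normal_exp_square_le_2_iff:
  fixes c :: real
  assumes "c > 0"
  shows "(\<integral>\<^sup>+ x. ennreal (std_normal_density x) * ennreal (exp (x\<^sup>2 / c)) \<partial>lborel) \<le> 2
         \<longleftrightarrow> c \<ge> 8 / 3"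
proof (cases "c > 2")
  case True
  have "ennreal (sqrt (c / (c - 2))) \<le> 2 \<longleftrightarrow> sqrt (c / (c - 2)) \<le> 2"
    by (metis ennreal_le_iff ennreal_numeral zero_le_numeral)
  also have "\<dots> \<longleftrightarrow> c / (c - 2) \<le> 4"
    by (metis real_sqrt_four real_sqrt_le_iff)
  also have "\<dots> \<longleftrightarrow> c \<ge> 8 / 3"
    using True by (simp add: field_simps)
  finally show ?thesis
    by (simp only: nn_integral_std_normal_exp_square[OF True])
next
  case False
  then show ?thesis
    using nn_integral_std_normal_exp_square_infinite[OF assms] by (simp add: top_unique)
qed

lemma abs_sgn_mult_powr_div_powr:
  fixes y K \<alpha> :: real
  assumes "\<alpha> > 0" and "K > 0"
  shows "\<bar>sgn y * \<bar>y\<bar> powr (2 / \<alpha>) / K\<bar> powr \<alpha> = y\<^sup>2 / K powr \<alpha>"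
proof (cases "y = 0")
  case True
  then show ?thesis
    using assms by simp
next
  case False
  then have "\<bar>sgn y * \<bar>y\<bar> powr (2 / \<alpha>) / K\<bar> powr \<alpha> = (\<bar>y\<bar> powr (2 / \<alpha>)) powr \<alpha> / K powr \<alpha>"
    using assms by (simp add: abs_mult abs_sgn_eq powr_divide)
  also have "\<dots> = \<bar>y\<bar> powr 2 / K powr \<alpha>"
    using assms by (simp add: powr_powr)
  finally show ?thesis
    using False by (simp add: powr_numeral)
qed

lemma powr_inverse_le_iff:
  fixes a K \<alpha> :: real
  assumes "\<alpha> > 0" and "a > 0" and "K > 0"
  shows "a powr (1 / \<alpha>) \<le> K \<longleftrightarrow> a \<le> K powr \<alpha>"
proof
  assume "a powr (1 / \<alpha>) \<le> K"
  then have "(a powr (1 / \<alpha>)) powr \<alpha> \<le> K powr \<alpha>"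
    using assms by (simp add: powr_mono2)
  then show "a \<le> K powr \<alpha>"
    using assms by (simp add: powr_powr)
next
  assume "a \<le> K powr \<alpha>"
  then have "a powr (1 / \<alpha>) \<le> (K powr \<alpha>) powr (1 / \<alpha>)"
    using assms by (simp add: powr_mono2)
  then show "a powr (1 / \<alpha>) \<le> K"
    using assms by (simp add: powr_powr)
qed

theorem mainTheorem4:
  fixes M :: "'a measure" and G :: "'a \<Rightarrow> real" and \<alpha> :: real
  assumes "prob_space M"
    and "distributed M lborel G std_normal_density"
    and "\<alpha> > 0"
  shows "psi_norm M \<alpha> (\<lambda>x. sgn (G x) * \<bar>G x\<bar> powr (2 / \<alpha>)) = ereal ((8 / 3) powr (1 / \<alpha>))"
proof (rule psi_norm_eqI)
  fix K :: real
  assume K: "K > 0"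
  have "(\<integral>\<^sup>+ x. ennreal (exp (\<bar>sgn (G x) * \<bar>G x\<bar> powr (2 / \<alpha>) / K\<bar> powr \<alpha>)) \<partial>M)
      = (\<integral>\<^sup>+ x. ennreal (exp ((G x)\<^sup>2 / K powr \<alpha>)) \<partial>M)"
    by (simp only: abs_sgn_mult_powr_div_powr[OF assms(3) K])
  also have "\<dots> = (\<integral>\<^sup>+ y. ennreal (std_normal_density y) * ennreal (exp (y\<^sup>2 / K powr \<alpha>)) \<partial>lborel)"
    by (rule distributed_nn_integral[OF assms(2), symmetric]) simp
  finally show "(\<integral>\<^sup>+ x. ennreal (exp (\<bar>sgn (G x) * \<bar>G x\<bar> powr (2 / \<alpha>) / K\<bar> powr \<alpha>)) \<partial>M) \<le> 2
      \<longleftrightarrow> (8 / 3) powr (1 / \<alpha>) \<le> K"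
    using assms(3) K by (simp add: nn_integral_std_normal_exp_square_le_2_iff powr_inverse_le_iff)
qed simp

end
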